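(* Let $G$ be a cyclic group of order $n\neq 4$ and let $\mathcal{A}$ be an $S$-ring over $G$ such that $\mathcal{A}=\mathbb{Z}G$ or $\mathcal{A}=\mathrm{Cyc}(K,G)$, where $K=\{\varepsilon,\sigma\}$ with $\varepsilon$ the identity and $\sigma:x\mapsto x^{-1}$. Suppose that $\varphi$ is an algebraic isomorphism from $\mathcal{A}$ to an $S$-ring $\mathcal{A}'$ over a finite abelian group $G'$. Then $G'\cong G$.
   Context: Let $G$ be a finite group with identity $e$; for $X\subseteq G$ write $\underline{X}=\sum_{x\in X}x\in\mathbb{Z}G$. An $S$-ring over $G$ is a subring $\mathcal{A}\subseteq\mathbb{Z}G$ for which there is a partition $\mathcal{S}(\mathcal{A})$ of $G$ (the basic sets) with $\{e\}\in\mathcal{S}(\mathcal{A})$, $X^{-1}\in\mathcal{S}(\mathcal{A})$ whenever $X\in\mathcal{S}(\mathcal{A})$, and $\mathcal{A}=\mathrm{Span}_{\mathbb{Z}}\{\underline{X}:X\in\mathcal{S}(\mathcal{A})\}$. Structure constants: $c^Z_{X,Y}$ is the number of $(x,y)\in X\times Y$ with $xy=z$ for fixed $z\in Z$. An algebraic isomorphism from $\mathcal{A}$ to an $S$-ring $\mathcal{A}'$ is a bijection $\varphi:\mathcal{S}(\mathcal{A})\to\mathcal{S}(\mathcal{A}')$ with $c^Z_{X,Y}=c^{Z^\varphi}_{X^\varphi,Y^\varphi}$ for all basic sets. For $K\leq\mathrm{Aut}(G)$, $\mathrm{Cyc}(K,G)$ is the $S$-ring over $G$ whose basic sets are the orbits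 of $K$ on $G$. *)

theory Defs
  imports "HOL-Algebra.Algebra"
begin

definition pair_count :: "('a, 'm) monoid_scheme \<Rightarrow> 'a set \<Rightarrow> 'a set \<Rightarrow> 'a \<Rightarrow> nat" where
  "pair_count G A B z = card {(x, y). x \<in> A \<and> y \<in> B \<and> x \<otimes>\<^bsub>G\<^esub> y = z}"

definition struct_const :: "('a, 'm) monoid_scheme \<Rightarrow> 'a set \<Rightarrow> 'a set \<Rightarrow> 'a set \<Rightarrow> nat" where
  "struct_const G A B C = pair_count G A B (SOME z. z \<in> C)"

definition inv_set :: "('a, 'm) monoid_scheme \<Rightarrow> 'a set \<Rightarrow> 'a set" where
  "inv_set G A = (\<lambda>x. m_inv G x) ` A"

text \<open>S is the set of basic sets of an S-ring over the finite group G.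
  Closure of the Z-span of the basic quantities under multiplication is written out:
  the product of two basic quantities has coefficients constant on each basic set.\<close>
definition S_ring :: "('a, 'm) monoid_scheme \<Rightarrow> 'a set set \<Rightarrow> bool" where
  "S_ring G S \<longleftrightarrow>
     (\<forall>A\<in>S. A \<noteq> {} \<and> A \<subseteq> carrier G) \<and> \<Union>S = carrier G \<and>
     (\<forall>A\<in>S. \<forall>B\<in>S. A \<noteq> B \<longrightarrow> A \<inter> B = {}) \<and>
     {\<one>\<^bsub>G\<^esub>} \<in> S \<and>
     (\<forall>A\<in>S. inv_set G A \<in> S) \<and>
     (\<forall>A\<in>S. \<forall>B\<in>S. \<forall>C\<in>S. \<forall>z\<in>C. \<forall>z'\<in>C. pair_count G A B z = pair_count G A B z')"

definition alg_iso :: "('a, 'm) monoid_scheme \<Rightarrow> 'a set set \<Rightarrow> ('b, 'n) monoid_scheme \<Rightarrow> 'b set set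
    \<Rightarrow> ('a set \<Rightarrow> 'b set) \<Rightarrow> bool" where
  "alg_iso G S G' S' \<phi> \<longleftrightarrow> bij_betw \<phi> S S' \<and>
     (\<forall>A\<in>S. \<forall>B\<in>S. \<forall>C\<in>S. struct_const G A B C = struct_const G' (\<phi> A) (\<phi> B) (\<phi> C))"

definition group_ring_basic_sets :: "('a, 'm) monoid_scheme \<Rightarrow> 'a set set" where
  "group_ring_basic_sets G = {{x} | x. x \<in> carrier G}"

definition cyc_basic_sets :: "('a, 'm) monoid_scheme \<Rightarrow> ('a \<Rightarrow> 'a) set \<Rightarrow> 'a set set" where
  "cyc_basic_sets G K = {{k x | k. k \<in> K} | x. x \<in> carrier G}"

end

theory Submission
  imports Defs
begin

text \<open>An algebraic isomorphism fixes the identity basic set and preserves sizes and inverses of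
  basic sets, so G' has the order of G. Let g generate G and let T \<subseteq> {g, g^-1} be its basic set.
  If the image T' were not of the form {a, a^-1}, it would consist of two distinct involutions a, b,
  and ab \<noteq> 1 would be written in two ways as a product of elements of T'. Transporting this
  structure constant back, some z \<noteq> 1 is written in two ways as a product of elements of T, which
  forces g^2 = z = g^-2, i.e. ord g = 4. Hence T' lies in a cyclic subgroup \<langle>a\<rangle> of G'. As every
  element of G is a power of g, the structure constants push every basic set of G' into \<langle>a\<rangle>, so
  G' = \<langle>a\<rangle> is cyclic of the same order as G.\<close>

lemma iso_cyclic_groups:
  assumes G: "group G" and H: "group H" and g: "g \<in> carrier G" and a: "a \<in> carrier H"
    and gen_G: "carrier G = generate G {g}" and gen_H: "carrier H = generate H {a}"
    and ord: "group.ord G g = group.ord H a"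
  shows "G \<cong> H"
proof -
  interpret G: group G by fact
  interpret H: group H by fact
  have cG: "carrier G = range (\<lambda>i::int. g [^]\<^bsub>G\<^esub> i)"
    using gen_G by (simp add: G.generate_pow[OF g] full_SetCompr_eq)
  have cH: "carrier H = range (\<lambda>i::int. a [^]\<^bsub>H\<^esub> i)"
    using gen_H by (simp add: H.generate_pow[OF a] full_SetCompr_eq)
  have eqv: "g [^]\<^bsub>G\<^esub> i = g [^]\<^bsub>G\<^esub> j \<longleftrightarrow> a [^]\<^bsub>H\<^esub> i = a [^]\<^bsub>H\<^esub> j" for i j :: int
    using G.int_pow_eq[OF g] H.int_pow_eq[OF a] ord by simp
  define h where "h x = a [^]\<^bsub>H\<^esub> (SOME i::int. g [^]\<^bsub>G\<^esub> i = x)" for x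
  have h_pow: "h (g [^]\<^bsub>G\<^esub> i) = a [^]\<^bsub>H\<^esub> i" for i :: int
  proof -
    have "g [^]\<^bsub>G\<^esub> (SOME j::int. g [^]\<^bsub>G\<^esub> j = g [^]\<^bsub>G\<^esub> i) = g [^]\<^bsub>G\<^esub> i"
      by (rule someI[of _ i]) simp
    then show ?thesis unfolding h_def using eqv by blast
  qed
  have "h \<in> hom G H"
  proof (rule homI)
    fix x assume "x \<in> carrier G"
    then obtain i :: int where "x = g [^]\<^bsub>G\<^esub> i" using cG by blast
    then show "h x \<in> carrier H" using h_pow a by simp
  next
    fix x y assume "x \<in> carrier G" "y \<in> carrier G"
    then obtain i j :: int where "x = g [^]\<^bsub>G\<^esub> i" "y = g [^]\<^bsub>G\<^esub> j" using cG by blast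
    then show "h (x \<otimes>\<^bsub>G\<^esub> y) = h x \<otimes>\<^bsub>H\<^esub> h y"
      using h_pow a g by (simp add: G.int_pow_mult[symmetric] H.int_pow_mult[symmetric])
  qed
  moreover have "bij_betw h (carrier G) (carrier H)"
  proof (rule bij_betw_imageI)
    show "inj_on h (carrier G)"
    proof (rule inj_onI)
      fix x y assume "x \<in> carrier G" "y \<in> carrier G" "h x = h y"
      moreover obtain i j :: int where "x = g [^]\<^bsub>G\<^esub> i" "y = g [^]\<^bsub>G\<^esub> j"
        using cG \<open>x \<in> carrier G\<close> \<open>y \<in> carrier G\<close> by blast
      ultimately show "x = y" using h_pow eqv by simp
    qed
    show "h ` carrier G = carrier H"
      unfolding cG cH image_image h_pow by simp
  qed
  ultimately show ?thesis unfolding is_iso_def iso_def by blast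
qed

lemma ord_eq_4_if_square_eq_inverse_square:
  fixes G (structure)
  assumes "group G" "g \<in> carrier G" "g \<otimes> g = inv g \<otimes> inv g" "g \<otimes> g \<noteq> \<one>"
  shows "group.ord G g = 4"
proof -
  interpret group G by fact
  have "g [^] (4::nat) = (g \<otimes> g) \<otimes> (g \<otimes> g)"
    using assms(2) by (simp add: numeral_eq_Suc m_assoc)
  also have "\<dots> = (inv g \<otimes> inv g) \<otimes> (g \<otimes> g)"
    using arg_cong[OF assms(3), of "\<lambda>x. x \<otimes> (g \<otimes> g)"] by simp
  also have "\<dots> = \<one>"
    using assms(2) by (simp add: m_assoc[symmetric]) (simp add: m_assoc)
  finally have dvd_4: "ord g dvd 4" using pow_eq_id[OF assms(2)] by blast
  have "g [^] (2::nat) \<noteq> \<one>" using assms(2,4) by (simp add: numeral_eq_Suc)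
  then have "\<not> ord g dvd 2" using pow_eq_id[OF assms(2)] by blast
  moreover have "ord g \<in> {1, 2, 3, 4}"
    using dvd_4 dvd_imp_le[OF dvd_4] by (cases "ord g = 0") auto
  ultimately show ?thesis using dvd_4 by auto
qed

lemma pair_count_pos_iff:
  assumes "finite A" "finite B"
  shows "0 < pair_count G A B z \<longleftrightarrow> (\<exists>x\<in>A. \<exists>y\<in>B. x \<otimes>\<^bsub>G\<^esub> y = z)"
proof -
  have "finite {(x, y). x \<in> A \<and> y \<in> B \<and> x \<otimes>\<^bsub>G\<^esub> y = z}"
    by (rule finite_subset[of _ "A \<times> B"]) (use assms in auto)
  then show ?thesis unfolding pair_count_def by (auto simp: card_gt_0_iff)
qed

lemma pair_count_inverse_pair_le_1:
  fixes G (structure)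
  assumes "group G" "g \<in> carrier G" "group.ord G g \<noteq> 4" "z \<noteq> \<one>"
  shows "pair_count G {g, inv g} {g, inv g} z \<le> 1"
proof -
  interpret group G by fact
  define P where "P = {(x, y). x \<in> {g, inv g} \<and> y \<in> {g, inv g} \<and> x \<otimes> y = z}"
  have P_sub: "P \<subseteq> {(g, g), (inv g, inv g)}"
    unfolding P_def using assms(2,4) by auto
  have "\<not> ((g, g) \<in> P \<and> (inv g, inv g) \<in> P)"
    using ord_eq_4_if_square_eq_inverse_square[OF assms(1,2)] assms(3,4) unfolding P_def by auto
  then obtain p where "P \<subseteq> {p}" using P_sub by blast
  then have "card P \<le> 1" using card_mono[of "{p}" P] by simp
  then show ?thesis unfolding pair_count_def P_def .
qed

lemma inverse_closed_pair_eq: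
  fixes G (structure)
  assumes "comm_group G" "U \<subseteq> carrier G" "card U = 2" "inv_set G U = U"
    and single_products: "\<And>c. c \<in> carrier G \<Longrightarrow> c \<noteq> \<one> \<Longrightarrow> pair_count G U U c \<le> 1"
  shows "\<exists>a\<in>carrier G. U = {a, inv a}"
proof -
  interpret comm_group G by fact
  obtain a b where U: "U = {a, b}" "a \<noteq> b" using assms(3) card_2_iff by metis
  have ab: "a \<in> carrier G" "b \<in> carrier G" using U assms(2) by auto
  have inv_in: "inv a \<in> U" "inv b \<in> U" using assms(4) U unfolding inv_set_def by blast+
  show ?thesis
  proof (cases "inv a = b")
    case True
    then show ?thesis using U ab by blast
  next
    case False
    \<comment> \<open>Then a and b are distinct involutions, and ab = ba has two decompositions.\<close>
    then have inv_a: "inv a = a" using inv_in(1) U(1) by auto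
    have "inv b \<noteq> a" using inv_a U(2) ab by (metis inv_inv)
    then have inv_b: "inv b = b" using inv_in(2) U(1) by auto
    have c: "a \<otimes> b \<in> carrier G" using ab by simp
    have c_ne: "a \<otimes> b \<noteq> \<one>"
    proof
      assume "a \<otimes> b = \<one>"
      then have "inv b = a" using inv_equality ab by blast
      then show False using inv_b U(2) by simp
    qed
    have "{(a, b), (b, a)} \<subseteq> {(x, y). x \<in> U \<and> y \<in> U \<and> x \<otimes> y = a \<otimes> b}"
      using U ab m_comm by auto
    moreover have "finite {(x, y). x \<in> U \<and> y \<in> U \<and> x \<otimes> y = a \<otimes> b}"
      by (rule finite_subset[of _ "U \<times> U"]) (use U in auto)
    ultimately have "card {(a, b), (b, a)} \<le> pair_count G U U (a \<otimes> b)"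
      unfolding pair_count_def by (rule card_mono[rotated])
    moreover have "card {(a, b), (b, a)} = 2" using U(2) by simp
    ultimately have "2 \<le> pair_count G U U (a \<otimes> b)" by simp
    then show ?thesis using single_products[OF c c_ne] by simp
  qed
qed

lemma basic_set_subset_inverse_pair:
  assumes "group G" "S = group_ring_basic_sets G \<or> S = cyc_basic_sets G {id, \<lambda>x. inv\<^bsub>G\<^esub> x}"
    and "T \<in> S" "g \<in> T"
  shows "T \<subseteq> {g, inv\<^bsub>G\<^esub> g}"
  using assms(2)
proof
  assume "S = group_ring_basic_sets G"
  then obtain x where "T = {x}" using assms(3) unfolding group_ring_basic_sets_def by blast
  then show ?thesis using assms(4) by blast
next
  assume "S = cyc_basic_sets G {id, \<lambda>x. inv\<^bsub>G\<^esub> x}"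
  then obtain x where x: "x \<in> carrier G" "T = {k x | k. k \<in> {id, \<lambda>x. inv\<^bsub>G\<^esub> x}}"
    using assms(3) unfolding cyc_basic_sets_def by blast
  have T: "T = {x, inv\<^bsub>G\<^esub> x}" unfolding x(2) by (auto intro: exI[of _ id])
  then have "g = x \<or> g = inv\<^bsub>G\<^esub> x" using assms(4) by blast
  then show ?thesis
  proof
    assume "g = inv\<^bsub>G\<^esub> x"
    moreover have "inv\<^bsub>G\<^esub> (inv\<^bsub>G\<^esub> x) = x" using group.inv_inv[OF assms(1) x(1)] .
    ultimately show ?thesis using T by auto
  qed (use T in blast)
qed

lemma S_ringD:
  assumes "S_ring G S"
  shows S_ring_subset_carrier: "A \<in> S \<Longrightarrow> A \<subseteq> carrier G"
    and S_ring_nonempty: "A \<in> S \<Longrightarrow> A \<noteq> {}"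
    and S_ring_Union: "\<Union>S = carrier G"
    and S_ring_disjoint: "A \<in> S \<Longrightarrow> B \<in> S \<Longrightarrow> A \<noteq> B \<Longrightarrow> A \<inter> B = {}"
    and S_ring_one: "{\<one>\<^bsub>G\<^esub>} \<in> S"
    and S_ring_inv_set: "A \<in> S \<Longrightarrow> inv_set G A \<in> S"
    and S_ring_pair_count_const: "\<lbrakk>A \<in> S; B \<in> S; C \<in> S; z \<in> C; z' \<in> C\<rbrakk>
      \<Longrightarrow> pair_count G A B z = pair_count G A B z'"
  using assms unfolding S_ring_def by metis+

lemma S_ring_basic_set_unique:
  assumes "S_ring G S" "A \<in> S" "B \<in> S" "z \<in> A" "z \<in> B"
  shows "A = B"
  using assms S_ring_disjoint[OF assms(1)] by blast

lemma S_ring_basic_set_one: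
  assumes "S_ring G S" "A \<in> S" "\<one>\<^bsub>G\<^esub> \<in> A"
  shows "A = {\<one>\<^bsub>G\<^esub>}"
  using S_ring_basic_set_unique[OF assms(1,2) S_ring_one[OF assms(1)] assms(3)] by simp

lemma struct_const_eq_pair_count:
  assumes "S_ring G S" "A \<in> S" "B \<in> S" "C \<in> S" "z \<in> C"
  shows "struct_const G A B C = pair_count G A B z"
proof -
  have "(SOME z. z \<in> C) \<in> C" using assms(5) by (rule someI)
  then show ?thesis
    using assms S_ring_pair_count_const[OF assms(1)] unfolding struct_const_def by blast
qed

lemma card_carrier_eq_sum_card_basic_sets:
  assumes "S_ring G S" "finite (carrier G)"
  shows "card (carrier G) = (\<Sum>A\<in>S. card A)"
proof -
  have "finite A" if "A \<in> S" for A
    using S_ring_subset_carrier[OF assms(1) that] assms(2) finite_subset by blast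
  then have "card (\<Union>S) = (\<Sum>A\<in>S. card A)"
    using S_ring_disjoint[OF assms(1)] by (intro card_Union_disjoint) (auto simp: pairwise_def disjnt_def)
  then show ?thesis using S_ring_Union[OF assms(1)] by simp
qed

lemma pair_count_one:
  fixes G (structure)
  assumes "group G" "S_ring G S" "U \<in> S" "V \<in> S"
  shows "pair_count G U V \<one> = (if V = inv_set G U then card U else 0)"
proof -
  interpret group G by fact
  have U: "U \<subseteq> carrier G" and V: "V \<subseteq> carrier G" using assms S_ring_subset_carrier by auto
  have pairs: "{(x, y). x \<in> U \<and> y \<in> V \<and> x \<otimes> y = \<one>} = (\<lambda>x. (x, inv x)) ` {x \<in> U. inv x \<in> V}"
  proof (intro equalityI subsetI)
    fix p assume "p \<in> {(x, y). x \<in> U \<and> y \<in> V \<and> x \<otimes> y = \<one>}"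
    then obtain x y where p: "p = (x, y)" "x \<in> U" "y \<in> V" "x \<otimes> y = \<one>" by blast
    then have "y = inv x" using U V by (metis inv_comm inv_equality subsetD)
    then show "p \<in> (\<lambda>x. (x, inv x)) ` {x \<in> U. inv x \<in> V}" using p by blast
  qed (use U in auto)
  show ?thesis
  proof (cases "V = inv_set G U")
    case True
    then have "{x \<in> U. inv x \<in> V} = U" unfolding inv_set_def by auto
    then show ?thesis
      using True unfolding pair_count_def pairs by (simp add: card_image inj_on_def)
  next
    case False
    have "inv x \<notin> V" if "x \<in> U" for x
    proof
      assume "inv x \<in> V"
      moreover have "inv x \<in> inv_set G U" using that unfolding inv_set_def by blast
      ultimately show False
        using False S_ring_basic_set_unique[OF assms(2,4) S_ring_inv_set[OF assms(2,3)]] by blast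
    qed
    then have "{x \<in> U. inv x \<in> V} = {}" by blast
    then show ?thesis using False unfolding pair_count_def pairs by (simp only: image_empty) simp
  qed
qed

locale S_ring_alg_iso = G: group G + G': group G'
  for G :: "('a, 'm) monoid_scheme" and G' :: "('b, 'n) monoid_scheme" +
  fixes S :: "'a set set" and S' :: "'b set set" and \<phi> :: "'a set \<Rightarrow> 'b set"
  assumes finite_carrier: "finite (carrier G)" and finite_carrier': "finite (carrier G')"
    and S_ring: "S_ring G S" and S_ring': "S_ring G' S'"
    and alg_iso: "alg_iso G S G' S' \<phi>"
begin

lemma finite_basic_set: "A \<in> S \<Longrightarrow> finite A"
  using S_ring_subset_carrier[OF S_ring] finite_carrier finite_subset by blast

lemma finite_basic_set': "A \<in> S' \<Longrightarrow> finite A"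
  using S_ring_subset_carrier[OF S_ring'] finite_carrier' finite_subset by blast

lemma bij_basic_sets: "bij_betw \<phi> S S'"
  using alg_iso unfolding alg_iso_def by simp

lemma image_basic_set: "A \<in> S \<Longrightarrow> \<phi> A \<in> S'"
  using bij_betwE[OF bij_basic_sets] by blast

lemma obtain_preimage:
  assumes "B \<in> S'"
  obtains A where "A \<in> S" "\<phi> A = B"
  using bij_betw_imp_surj_on[OF bij_basic_sets] assms that by blast

lemma pair_count_transfer:
  assumes "U \<in> S" "Y \<in> S" "Z \<in> S" "z \<in> Z" "c \<in> \<phi> Z"
  shows "pair_count G U Y z = pair_count G' (\<phi> U) (\<phi> Y) c"
proof -
  have "pair_count G U Y z = struct_const G U Y Z"
    by (rule struct_const_eq_pair_count[symmetric, OF S_ring assms(1-4)])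
  also have "\<dots> = struct_const G' (\<phi> U) (\<phi> Y) (\<phi> Z)"
    using conjunct2[OF alg_iso[unfolded alg_iso_def]] assms(1-3) by blast
  also have "\<dots> = pair_count G' (\<phi> U) (\<phi> Y) c"
    by (rule struct_const_eq_pair_count[OF S_ring' image_basic_set[OF assms(1)]
        image_basic_set[OF assms(2)] image_basic_set[OF assms(3)] assms(5)])
  finally show ?thesis .
qed

lemma image_one: "\<phi> {\<one>\<^bsub>G\<^esub>} = {\<one>\<^bsub>G'\<^esub>}"
proof -
  obtain Y where Y: "Y \<in> S" "\<phi> Y = {\<one>\<^bsub>G'\<^esub>}" using obtain_preimage[OF S_ring_one[OF S_ring']] .
  obtain y where y: "y \<in> Y" using S_ring_nonempty[OF S_ring Y(1)] by blast
  have "y \<in> carrier G" using y S_ring_subset_carrier[OF S_ring Y(1)] by blast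
  then have "0 < pair_count G {\<one>\<^bsub>G\<^esub>} Y y"
    using y finite_basic_set[OF Y(1)] by (subst pair_count_pos_iff) (auto intro!: bexI[of _ y])
  also have "pair_count G {\<one>\<^bsub>G\<^esub>} Y y = pair_count G' (\<phi> {\<one>\<^bsub>G\<^esub>}) {\<one>\<^bsub>G'\<^esub>} \<one>\<^bsub>G'\<^esub>"
    using pair_count_transfer[OF S_ring_one[OF S_ring] Y(1) Y(1) y] Y(2) by simp
  finally have "\<one>\<^bsub>G'\<^esub> \<in> \<phi> {\<one>\<^bsub>G\<^esub>}"
    using finite_basic_set'[OF image_basic_set[OF S_ring_one[OF S_ring]]]
      S_ring_subset_carrier[OF S_ring' image_basic_set[OF S_ring_one[OF S_ring]]]
    by (subst (asm) pair_count_pos_iff) auto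
  then show ?thesis
    using S_ring_basic_set_one[OF S_ring' image_basic_set[OF S_ring_one[OF S_ring]]] by blast
qed

lemma card_image_basic_set: "A \<in> S \<Longrightarrow> card (\<phi> A) = card A"
  and image_inv_set: "A \<in> S \<Longrightarrow> \<phi> (inv_set G A) = inv_set G' (\<phi> A)"
proof -
  assume A: "A \<in> S"
  have A': "\<phi> A \<in> S'" using image_basic_set[OF A] .
  obtain B where B: "B \<in> S" "\<phi> B = inv_set G' (\<phi> A)"
    using obtain_preimage[OF S_ring_inv_set[OF S_ring' A']] .
  \<comment> \<open>Both sides count the pairs with product 1, which only inverse basic sets produce.\<close>
  have "pair_count G A B \<one>\<^bsub>G\<^esub> = pair_count G' (\<phi> A) (inv_set G' (\<phi> A)) \<one>\<^bsub>G'\<^esub>"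
    using pair_count_transfer[OF A B(1) S_ring_one[OF S_ring]] image_one B(2) by simp
  then have "(if B = inv_set G A then card A else 0) = card (\<phi> A)"
    using pair_count_one[OF G.is_group S_ring A B(1)]
      pair_count_one[OF G'.is_group S_ring' A' S_ring_inv_set[OF S_ring' A']] by simp
  moreover have "card (\<phi> A) > 0"
    using finite_basic_set'[OF A'] S_ring_nonempty[OF S_ring' A'] by (simp add: card_gt_0_iff)
  ultimately have "B = inv_set G A" "card (\<phi> A) = card A" by (metis less_irrefl)+
  then show "card (\<phi> A) = card A" "\<phi> (inv_set G A) = inv_set G' (\<phi> A)" using B(2) by simp_all
qed

lemma card_carrier': "card (carrier G') = card (carrier G)"
proof -
  have "card (carrier G') = (\<Sum>A\<in>S. card (\<phi> A))"
    using card_carrier_eq_sum_card_basic_sets[OF S_ring' finite_carrier']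
      sum.reindex_bij_betw[OF bij_basic_sets, of card] by simp
  also have "\<dots> = card (carrier G)"
    using card_image_basic_set card_carrier_eq_sum_card_basic_sets[OF S_ring finite_carrier] by simp
  finally show ?thesis .
qed

lemma pair_count_transfer_nonunit:
  assumes "U \<in> S" "Y \<in> S" "c \<in> carrier G'" "c \<noteq> \<one>\<^bsub>G'\<^esub>"
  obtains z where "z \<noteq> \<one>\<^bsub>G\<^esub>" "pair_count G U Y z = pair_count G' (\<phi> U) (\<phi> Y) c"
proof -
  obtain Z' where Z': "Z' \<in> S'" "c \<in> Z'" using S_ring_Union[OF S_ring'] assms(3) by blast
  obtain Z where Z: "Z \<in> S" "\<phi> Z = Z'" using obtain_preimage[OF Z'(1)] .
  obtain z where z: "z \<in> Z" using S_ring_nonempty[OF S_ring Z(1)] by blast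
  have "z \<noteq> \<one>\<^bsub>G\<^esub>"
    using S_ring_basic_set_one[OF S_ring Z(1)] image_one Z Z'(2) z assms(4) by auto
  then show ?thesis using that pair_count_transfer[OF assms(1,2) Z(1) z] Z Z'(2) by blast
qed

lemma image_subset_subgroup_mult:
  assumes "subgroup H G'" "U \<in> S" "Y \<in> S" "Z \<in> S" "\<phi> U \<subseteq> H" "\<phi> Y \<subseteq> H"
    and "x \<in> U" "y \<in> Y" "x \<otimes>\<^bsub>G\<^esub> y \<in> Z"
  shows "\<phi> Z \<subseteq> H"
proof
  fix c assume c: "c \<in> \<phi> Z"
  have "0 < pair_count G U Y (x \<otimes>\<^bsub>G\<^esub> y)"
    using pair_count_pos_iff[OF finite_basic_set[OF assms(2)] finite_basic_set[OF assms(3)]]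
      assms(7,8) by blast
  then have "0 < pair_count G' (\<phi> U) (\<phi> Y) c"
    using pair_count_transfer[OF assms(2-4,9) c] by simp
  then have "\<exists>x'\<in>\<phi> U. \<exists>y'\<in>\<phi> Y. x' \<otimes>\<^bsub>G'\<^esub> y' = c"
    by (rule pair_count_pos_iff[where G = G', OF finite_basic_set'[OF image_basic_set[OF assms(2)]]
        finite_basic_set'[OF image_basic_set[OF assms(3)]], THEN iffD1])
  then obtain x' y' where "x' \<in> H" "y' \<in> H" "c = x' \<otimes>\<^bsub>G'\<^esub> y'" using assms(5,6) by blast
  then show "c \<in> H" using subgroup.m_closed[OF assms(1)] by simp
qed

lemma carrier_subset_subgroup_if_generator:
  assumes "subgroup H G'" "g \<in> carrier G" "carrier G = generate G {g}"
    and "T \<in> S" "g \<in> T" "\<phi> T \<subseteq> H"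
  shows "carrier G' \<subseteq> H"
proof -
  have powers: "\<phi> Z \<subseteq> H" if "Z \<in> S" "g [^]\<^bsub>G\<^esub> k \<in> Z" for Z and k :: nat
    using that
  proof (induction k arbitrary: Z)
    case 0
    then have "Z = {\<one>\<^bsub>G\<^esub>}" using S_ring_basic_set_one[OF S_ring] by simp
    then show ?case using image_one subgroup.one_closed[OF assms(1)] by simp
  next
    case (Suc k)
    obtain W where W: "W \<in> S" "g [^]\<^bsub>G\<^esub> k \<in> W"
      using S_ring_Union[OF S_ring] assms(2) by blast
    have "g \<otimes>\<^bsub>G\<^esub> g [^]\<^bsub>G\<^esub> k \<in> Z"
      using Suc.prems(2) assms(2) by (simp add: G.nat_pow_Suc2[symmetric])
    then show ?case
      using image_subset_subgroup_mult[OF assms(1,4) W(1) Suc.prems(1) assms(6) Suc.IH[OF W] assms(5) W(2)]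
      by simp
  qed
  show ?thesis
  proof
    fix c assume "c \<in> carrier G'"
    then obtain B where B: "B \<in> S'" "c \<in> B" using S_ring_Union[OF S_ring'] by blast
    obtain A where A: "A \<in> S" "\<phi> A = B" using obtain_preimage[OF B(1)] .
    obtain x where x: "x \<in> A" using S_ring_nonempty[OF S_ring A(1)] by blast
    then have "x \<in> generate G {g}" using S_ring_subset_carrier[OF S_ring A(1)] assms(3) by blast
    then obtain k :: nat where "x = g [^]\<^bsub>G\<^esub> k"
      using G.generate_pow_on_finite_carrier[OF finite_carrier assms(2)] by blast
    then show "c \<in> H" using powers[OF A(1)] x A(2) B(2) by blast
  qed
qed

lemma image_inverse_pair_basic_set_cyclic:
  assumes "comm_group G'" "g \<in> carrier G" "group.ord G g \<noteq> 4"
    and "T \<in> S" "g \<in> T" "T \<subseteq> {g, inv\<^bsub>G\<^esub> g}"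
  shows "\<exists>a\<in>carrier G'. \<phi> T \<subseteq> generate G' {a}"
proof -
  have T': "\<phi> T \<in> S'" "\<phi> T \<subseteq> carrier G'"
    using image_basic_set[OF assms(4)] S_ring_subset_carrier[OF S_ring'] by auto
  have card_pair: "card {g, inv\<^bsub>G\<^esub> g} \<le> 2" by (simp add: card_insert_if)
  have "card T \<noteq> 0" using finite_basic_set[OF assms(4)] assms(5) by auto
  moreover have "card T \<le> 2"
    using card_mono[OF _ assms(6)] card_pair by (meson finite.emptyI finite.insertI le_trans)
  ultimately consider "card T = 1" | "card T = 2" by linarith
  then show ?thesis
  proof cases
    case 1
    then have "card (\<phi> T) = 1" using card_image_basic_set[OF assms(4)] by simp
    then obtain a where a: "\<phi> T = {a}" by (rule card_1_singletonE)
    have "a \<in> carrier G'" "a \<in> generate G' {a}" using a T'(2) by (auto intro: generate.incl)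
    then show ?thesis using a by (intro bexI[of _ a]) simp_all
  next
    case 2
    then have T: "T = {g, inv\<^bsub>G\<^esub> g}" using card_seteq[OF _ assms(6)] card_pair by simp
    then have "inv_set G T = T" using assms(2) unfolding inv_set_def by auto
    then have "inv_set G' (\<phi> T) = \<phi> T" using image_inv_set[OF assms(4)] by simp
    moreover have "pair_count G' (\<phi> T) (\<phi> T) c \<le> 1"
      if c: "c \<in> carrier G'" "c \<noteq> \<one>\<^bsub>G'\<^esub>" for c
    proof -
      obtain z where z: "z \<noteq> \<one>\<^bsub>G\<^esub>" "pair_count G T T z = pair_count G' (\<phi> T) (\<phi> T) c"
        using pair_count_transfer_nonunit[OF assms(4) assms(4) c] .
      have "pair_count G T T z \<le> 1"
        using pair_count_inverse_pair_le_1[OF G.is_group assms(2,3) z(1)] T by simp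
      then show ?thesis using z(2) by simp
    qed
    moreover have "card (\<phi> T) = 2" using 2 card_image_basic_set[OF assms(4)] by simp
    ultimately obtain a where "a \<in> carrier G'" "\<phi> T = {a, inv\<^bsub>G'\<^esub> a}"
      using inverse_closed_pair_eq[OF assms(1) T'(2)] by blast
    moreover have "a \<in> generate G' {a}" "inv\<^bsub>G'\<^esub> a \<in> generate G' {a}"
      by (auto intro: generate.incl generate.inv)
    ultimately show ?thesis by auto
  qed
qed

end

theorem lemma5p1:
  fixes G :: "('a, 'm) monoid_scheme" and G' :: "('b, 'n) monoid_scheme"
    and S :: "'a set set" and S' :: "'b set set" and \<phi> :: "'a set \<Rightarrow> 'b set"
  assumes "group G" and "finite (carrier G)" and "cyclic_group G" and "order G \<noteq> 4"
    and "S_ring G S"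
    and "S = group_ring_basic_sets G \<or> S = cyc_basic_sets G {id, \<lambda>x. m_inv G x}"
    and "comm_group G'" and "finite (carrier G')"
    and "S_ring G' S'"
    and "alg_iso G S G' S' \<phi>"
  shows "G \<cong> G'"
proof -
  interpret G: group G by fact
  interpret G': comm_group G' by fact
  interpret S_ring_alg_iso G G' S S' \<phi>
    using assms by unfold_locales auto
  obtain g where g: "g \<in> carrier G" and "carrier G = range (\<lambda>i::int. g [^]\<^bsub>G\<^esub> i)"
    using assms(3) G.cyclic_group by blast
  then have gen: "carrier G = generate G {g}" using G.generate_pow[OF g] by (simp add: full_SetCompr_eq)
  have ord_g: "G.ord g = order G" using G.generate_pow_card[OF g] gen unfolding order_def by simp
  obtain T where T: "T \<in> S" "g \<in> T" using S_ring_Union[OF assms(5)] g by blast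
  obtain a where a: "a \<in> carrier G'" and T_sub: "\<phi> T \<subseteq> generate G' {a}"
    using image_inverse_pair_basic_set_cyclic[OF assms(7) g _ T
        basic_set_subset_inverse_pair[OF assms(1,6) T]] ord_g assms(4) by auto
  have gen': "carrier G' = generate G' {a}"
    using carrier_subset_subgroup_if_generator[OF G'.generate_is_subgroup g gen T T_sub] a
      G'.generate_incl[of "{a}"] by auto
  have "G'.ord a = G.ord g"
    using G'.generate_pow_card[OF a] gen' card_carrier' ord_g unfolding order_def by simp
  then show ?thesis using iso_cyclic_groups[OF assms(1) G'.is_group g a gen gen'] by simp
qed

end
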